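(* In the setting of the context, at every iteration $n$ the search directions satisfy $\langle v_{n,j},J_{p^*}(v_{n,k})\rangle=0$ for all $1\le j<k\le N_n$.
   Context: $X$ is a real smooth, uniformly convex Banach space, $Y$ a real Banach space, $A:X\to Y$ bounded linear with adjoint $A^*$, $y\in\mathcal{R}(A)$. Fix $p,r\in(1,\infty)$, $p^*=p/(p-1)$. $J_p:X\to X^*$ is the duality mapping with gauge $t^{p-1}$, $J_{p^*}:X^*\to X$ the duality mapping of $X^*$ with gauge $t^{p^*-1}$ ($\langle J_{p^*}(v),v\rangle=\|v\|^{p^*}$, $\|J_{p^*}(v)\|=\|v\|^{p^*-1}$), $J_r^Y$ a single-valued selection of the duality mapping of $Y$ with gauge $t^{r-1}$. Method: choose $x_0$ with $J_p(x_0)\in\overline{\mathcal{R}(A^* )}$, fix $N\in\mathbb{N}$, $N_n=\min(N,n+1)$. For $n=0,1,\dots$: $w_n=Ax_n-y$; stop if $w_n=0$. Else $u_n=A^*J_r^Y(w_n)$. Let $s_n$ minimize $s\mapsto\|u_n-\sum_{i=1}^{N_{n-1}}s_iv_{n-1,i}\|^{p^*}_{X^*}$ (empty sum for $n=0$), set $v_{n,N_n}=u_n-\sum_k s_{n,k}v_{n-1,k}$; $v_{n,1},\dots,v_{n,N_n-1}$ are the last $N_n-1$ entries of the previous list $v_{n-1,1},\dots,v_{n-1,N_{n-1}}$, in order. With precursors $w^*_{n,k}$ ($v_{n,k}=A^*w^*_{n,k}$, built by the same linear combinations from $J_r^Y(w_n)$) and offsets $\beta_{n,k}=\langle w^*_{n,k},y\rangle$,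 $t_n$ minimizes $h_n(t)=\tfrac1{p^*}\|J_p(x_n)-\sum_k t_kv_{n,k}\|^{p^*}+\sum_k t_k\beta_{n,k}$ and $x_{n+1}=J_{p^*}(J_p(x_n)-\sum_k t_{n,k}v_{n,k})$. *)

theory Defs
  imports "HOL-Analysis.Analysis"
begin

definition unif_convex :: "'a::real_normed_vector itself \<Rightarrow> bool" where
  "unif_convex _ \<longleftrightarrow>
     (\<forall>\<epsilon>>0. \<exists>\<delta>>0. \<forall>x y::'a. norm x \<le> 1 \<longrightarrow> norm y \<le> 1 \<longrightarrow> norm (x - y) \<ge> \<epsilon>
        \<longrightarrow> norm ((x + y) /\<^sub>R 2) \<le> 1 - \<delta>)"

definition smooth_space :: "'a::real_normed_vector itself \<Rightarrow> bool" where
  "smooth_space _ \<longleftrightarrow>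
     (\<forall>x::'a. x \<noteq> 0 \<longrightarrow> (\<exists>g :: 'a \<Rightarrow>\<^sub>L real. \<forall>h.
        ((\<lambda>\<tau>. norm (x + \<tau> *\<^sub>R h)) has_real_derivative blinfun_apply g h) (at 0)))"

definition duality_map :: "real \<Rightarrow> ('a::real_normed_vector \<Rightarrow> ('a \<Rightarrow>\<^sub>L real)) \<Rightarrow> bool" where
  "duality_map q J \<longleftrightarrow>
     (\<forall>x. blinfun_apply (J x) x = norm x powr q \<and> norm (J x) = norm x powr (q - 1))"

text \<open>Duality mapping of the dual space X* with gauge t^(q-1), with values in X
  (identifying X** with X, X being reflexive).\<close>
definition dual_duality_map :: "real \<Rightarrow> (('a::real_normed_vector \<Rightarrow>\<^sub>L real) \<Rightarrow> 'a) \<Rightarrow> bool" where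
  "dual_duality_map q J \<longleftrightarrow>
     (\<forall>v. blinfun_apply v (J v) = norm v powr q \<and> norm (J v) = norm v powr (q - 1))"

definition adj :: "('a::real_normed_vector \<Rightarrow>\<^sub>L 'b::real_normed_vector) \<Rightarrow> ('b \<Rightarrow>\<^sub>L real) \<Rightarrow> ('a \<Rightarrow>\<^sub>L real)" where
  "adj A w = w o\<^sub>L A"

definition Nn :: "nat \<Rightarrow> nat \<Rightarrow> nat" where
  "Nn N n = min N (n + 1)"

end

theory Submission
  imports Defs
begin

text \<open>
  The newest direction is \<open>v = u - \<Sum>\<^sub>k s\<^sub>k v\<^sub>k\<close> with \<open>s\<close> minimizing the residual norm, so \<open>v\<close> is
  Birkhoff--James orthogonal to every previous direction: moving along any \<open>v\<^sub>k\<close> cannot shorten it.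
  Since \<open>X\<close> is uniformly convex, \<open>X\<^sup>*\<close> is smooth, and in a smooth space Birkhoff--James
  orthogonality of \<open>v\<close> to \<open>h\<close> means exactly that \<open>h\<close> vanishes at the norming point \<open>J\<^sub>p\<^sub>*(v)\<close> of \<open>v\<close>.
  The older directions are only shifted along, so the claim follows by induction on \<open>n\<close>.
\<close>

definition bj_orthogonal :: "'a::real_normed_vector \<Rightarrow> 'a \<Rightarrow> bool" where
  "bj_orthogonal g h \<longleftrightarrow> (\<forall>\<tau>. norm g \<le> norm (g - \<tau> *\<^sub>R h))"

lemma bj_orthogonal_uminus_iff: "bj_orthogonal g (- h) \<longleftrightarrow> bj_orthogonal g h"
proof -
  have "bj_orthogonal g (- h)" if "bj_orthogonal g h" for h
    using that unfolding bj_orthogonal_def by (metis scaleR_minus_left scaleR_minus_right)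
  from this[of h] this[of "- h"] show ?thesis by auto
qed

lemma powr_le_imp_le_base:
  fixes x y a :: real
  assumes "x powr a \<le> y powr a" and "a > 0" and "y \<ge> 0"
  shows "x \<le> y"
  using assms powr_less_mono2[of a y x] by fastforce

lemma bj_orthogonal_least_residual:
  fixes u :: "'a::real_normed_vector" and w :: "'i \<Rightarrow> 'a"
  assumes least: "\<And>\<sigma>. norm (u - (\<Sum>i\<in>I. s i *\<^sub>R w i)) \<le> norm (u - (\<Sum>i\<in>I. \<sigma> i *\<^sub>R w i))"
    and "finite I" and "k \<in> I"
  shows "bj_orthogonal (u - (\<Sum>i\<in>I. s i *\<^sub>R w i)) (w k)"
  unfolding bj_orthogonal_def
proof
  fix \<tau> :: real
  have "(if i = k then \<tau> else 0) *\<^sub>R w i = (if i = k then \<tau> *\<^sub>R w k else 0)" for i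
    by simp
  then have "(\<Sum>i\<in>I. (s i + (if i = k then \<tau> else 0)) *\<^sub>R w i) = (\<Sum>i\<in>I. s i *\<^sub>R w i) + \<tau> *\<^sub>R w k"
    using assms(2,3) by (simp add: scaleR_add_left sum.distrib)
  then show "norm (u - (\<Sum>i\<in>I. s i *\<^sub>R w i)) \<le> norm (u - (\<Sum>i\<in>I. s i *\<^sub>R w i) - \<tau> *\<^sub>R w k)"
    using least[of "\<lambda>i. s i + (if i = k then \<tau> else 0)"] by (simp add: diff_diff_eq)
qed

lemma norming_vector_exists:
  fixes f :: "'a::real_normed_vector \<Rightarrow>\<^sub>L real"
  assumes "b < norm f"
  shows "\<exists>z. norm z \<le> 1 \<and> f z > b"
proof (rule ccontr)
  assume none: "\<not> ?thesis"
  then have "0 \<le> b"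
    by (metis blinfun.zero_right norm_zero zero_le_one not_le)
  have "norm f \<le> b"
  proof (rule norm_blinfun_bound[OF \<open>0 \<le> b\<close>])
    fix x :: 'a
    show "norm (f x) \<le> b * norm x"
    proof (cases "x = 0")
      case False
      then have "f (x /\<^sub>R norm x) \<le> b" "f (- (x /\<^sub>R norm x)) \<le> b"
        using none by (auto simp: not_less)
      then have "\<bar>f x\<bar> / norm x \<le> b"
        by (simp add: blinfun.scaleR_right blinfun.minus_right abs_if divide_inverse mult.commute)
      with False show ?thesis by (simp add: pos_divide_le_eq mult.commute)
    qed (simp add: blinfun.zero_right)
  qed
  with assms show False by simp
qed

lemma unif_convex_almost_norming_close:
  fixes g :: "'a::real_normed_vector \<Rightarrow>\<^sub>L real"
  assumes uc: "unif_convex TYPE('a)" and "norm x \<le> 1" and gx: "g x = norm g"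
    and "norm g > 0" and "\<eta> > 0"
  shows "\<exists>\<epsilon>>0. \<forall>z. norm z \<le> 1 \<longrightarrow> g z > norm g - \<epsilon> \<longrightarrow> norm (x - z) < \<eta>"
proof -
  obtain \<delta> where "\<delta> > 0" and \<delta>: "\<And>x z::'a. norm x \<le> 1 \<Longrightarrow> norm z \<le> 1 \<Longrightarrow> norm (x - z) \<ge> \<eta>
      \<Longrightarrow> norm ((x + z) /\<^sub>R 2) \<le> 1 - \<delta>"
    using uc \<open>\<eta> > 0\<close> unfolding unif_convex_def by blast
  have "norm (x - z) < \<eta>" if "norm z \<le> 1" and gz: "g z > norm g - 2 * \<delta> * norm g" for z
  proof (rule ccontr)
    assume "\<not> norm (x - z) < \<eta>"
    then have "norm (x + z) \<le> 2 - 2 * \<delta>"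
      using \<delta>[of x z] \<open>norm x \<le> 1\<close> \<open>norm z \<le> 1\<close> by simp
    then have "g (x + z) \<le> norm g * (2 - 2 * \<delta>)"
      using norm_blinfun[of g "x + z"] mult_left_mono[of _ _ "norm g"] by fastforce
    with gx gz show False by (simp add: blinfun.add_right algebra_simps)
  qed
  moreover have "2 * \<delta> * norm g > 0"
    using \<open>\<delta> > 0\<close> \<open>norm g > 0\<close> by simp
  ultimately show ?thesis by blast
qed

lemma norm_blinfun_apply_le_on_ball:
  fixes f :: "'a::real_normed_vector \<Rightarrow>\<^sub>L real"
  assumes "norm z \<le> 1"
  shows "\<bar>f z\<bar> \<le> norm f"
  using norm_blinfun[of f z] mult_left_le[OF assms norm_ge_zero[of f]] by simp

lemma bj_orthogonal_norming_nonpos: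
  fixes g h :: "'a::real_normed_vector \<Rightarrow>\<^sub>L real"
  assumes uc: "unif_convex TYPE('a)" and "norm x \<le> 1" and gx: "g x = norm g"
    and "norm g > 0" and orth: "bj_orthogonal g h"
  shows "h x \<le> 0"
proof (rule ccontr)
  assume "\<not> h x \<le> 0"
  then have "h x > 0" by simp
  moreover have "h x \<le> norm h"
    using norm_blinfun_apply_le_on_ball[OF \<open>norm x \<le> 1\<close>, of h] by simp
  ultimately have "norm h > 0" by linarith
  with \<open>h x > 0\<close> have "h x / (2 * norm h) > 0" by simp
  then obtain \<epsilon> where "\<epsilon> > 0"
    and close: "\<And>z. norm z \<le> 1 \<Longrightarrow> g z > norm g - \<epsilon> \<Longrightarrow> norm (x - z) < h x / (2 * norm h)"
    using unif_convex_almost_norming_close[OF uc \<open>norm x \<le> 1\<close> gx \<open>norm g > 0\<close>] by blast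
  define \<tau> where "\<tau> = min (h x / 2) (\<epsilon> / (2 * norm h))"
  have "\<tau> > 0" "\<tau> \<le> h x / 2"
    using \<open>h x > 0\<close> \<open>\<epsilon> > 0\<close> \<open>norm h > 0\<close> by (simp_all add: \<tau>_def)
  have "\<tau> * (\<tau> + norm h) \<le> \<tau> * (2 * norm h)"
    using \<open>\<tau> > 0\<close> \<open>\<tau> \<le> h x / 2\<close> \<open>h x \<le> norm h\<close> by simp
  also have "\<dots> \<le> \<epsilon>"
  proof -
    have "\<tau> \<le> \<epsilon> / (2 * norm h)" by (simp add: \<tau>_def)
    with \<open>norm h > 0\<close> show ?thesis by (simp add: pos_le_divide_eq mult.commute)
  qed
  finally have small: "\<tau> * (\<tau> + norm h) \<le> \<epsilon>" .
  \<comment> \<open>A point almost norming \<open>g - \<tau> h\<close> (whose norm is \<open>\<ge> norm g\<close>) almost norms \<open>g\<close>, hence lies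
    near \<open>x\<close>, yet \<open>h\<close> is small there while \<open>h x\<close> is not.\<close>
  have "norm g \<le> norm (g - \<tau> *\<^sub>R h)" "\<tau>\<^sup>2 > 0"
    using orth \<open>\<tau> > 0\<close> by (simp_all add: bj_orthogonal_def)
  then have "norm g - \<tau>\<^sup>2 < norm (g - \<tau> *\<^sub>R h)"
    by linarith
  then obtain z where "norm z \<le> 1" and gz: "g z - \<tau> * h z > norm g - \<tau>\<^sup>2"
    using norming_vector_exists[of "norm g - \<tau>\<^sup>2" "g - \<tau> *\<^sub>R h"]
    by (auto simp: blinfun.diff_left blinfun.scaleR_left)
  have "g z \<le> norm g" "- norm h \<le> h z"
    using norm_blinfun_apply_le_on_ball[OF \<open>norm z \<le> 1\<close>, of g]
      norm_blinfun_apply_le_on_ball[OF \<open>norm z \<le> 1\<close>, of h] by linarith+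
  have "\<tau> * h z < \<tau> * \<tau>"
    using gz \<open>g z \<le> norm g\<close> unfolding power2_eq_square by linarith
  then have "h z < \<tau>"
    using \<open>\<tau> > 0\<close> by simp
  have "\<tau> * (- norm h) \<le> \<tau> * h z"
    using mult_left_mono[OF \<open>- norm h \<le> h z\<close>] \<open>\<tau> > 0\<close> by simp
  then have "g z > norm g - \<epsilon>"
    using gz small unfolding power2_eq_square by (simp add: algebra_simps)
  then have "norm (x - z) < h x / (2 * norm h)"
    by (rule close[OF \<open>norm z \<le> 1\<close>])
  have "h (x - z) \<le> norm h * norm (x - z)"
    using norm_blinfun[of h "x - z"] by simp
  also have "\<dots> < norm h * (h x / (2 * norm h))"
    using mult_strict_left_mono[OF \<open>norm (x - z) < _\<close> \<open>norm h > 0\<close>] .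
  also have "\<dots> = h x / 2"
    using \<open>norm h > 0\<close> by simp
  finally have "h (x - z) < h x / 2" .
  with \<open>h z < \<tau>\<close> \<open>\<tau> \<le> h x / 2\<close> show False by (simp add: blinfun.diff_right)
qed

lemma bj_orthogonal_dual_duality_map:
  fixes g h :: "'a::real_normed_vector \<Rightarrow>\<^sub>L real"
  assumes uc: "unif_convex TYPE('a)" and J: "dual_duality_map q J" and orth: "bj_orthogonal g h"
  shows "h (J g) = 0"
proof (cases "g = 0")
  case True
  then show ?thesis
    using J[unfolded dual_duality_map_def, rule_format, of 0] by (simp add: blinfun.zero_right)
next
  case False
  define c where "c = norm g powr (q - 1)"
  have "c > 0" "norm (J g) = c" "g (J g) = norm g powr q"
    using J False by (simp_all add: c_def dual_duality_map_def)
  define x where "x = J g /\<^sub>R c"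
  have "norm x \<le> 1"
    using \<open>c > 0\<close> \<open>norm (J g) = c\<close> by (simp add: x_def)
  have "norm g powr q / c = norm g"
    using False by (simp add: c_def powr_diff[symmetric])
  then have "g x = norm g"
    using \<open>g (J g) = norm g powr q\<close> by (simp add: x_def blinfun.scaleR_right divide_inverse_commute)
  then have "h x \<le> 0" "(- h) x \<le> 0"
    using bj_orthogonal_norming_nonpos[OF uc \<open>norm x \<le> 1\<close>] False orth
      bj_orthogonal_uminus_iff[THEN iffD2, OF orth] by simp_all
  then have "h x = 0" by (simp add: blinfun.minus_left)
  with \<open>c > 0\<close> show ?thesis by (simp add: x_def blinfun.scaleR_right)
qed

text \<open>The new list of length \<open>m'\<close> consists of the last \<open>m' - 1\<close> entries of the old list of length
  \<open>m\<close>, followed by an entry related to all old entries.\<close>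
lemma pairwise_after_shift:
  fixes R :: "'v \<Rightarrow> 'v \<Rightarrow> bool" and v w :: "nat \<Rightarrow> 'v"
  assumes "m' \<le> m + 1"
    and old: "\<And>i i'. 1 \<le> i \<Longrightarrow> i < i' \<Longrightarrow> i' \<le> m \<Longrightarrow> R (v i) (v i')"
    and new: "\<And>i. 1 \<le> i \<Longrightarrow> i \<le> m \<Longrightarrow> R (v i) (w m')"
    and shift: "\<And>j. 1 \<le> j \<Longrightarrow> j < m' \<Longrightarrow> w j = v (m + 1 + j - m')"
    and "1 \<le> j" "j < k" "k \<le> m'"
  shows "R (w j) (w k)"
proof (cases "k = m'")
  case True
  then show ?thesis using new shift assms(1,5,6) by simp
next
  case False
  then show ?thesis using old shift assms(1,5,6,7) by simp
qed

theorem mainTheorem3: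
  fixes A :: "'a::banach \<Rightarrow>\<^sub>L 'b::banach" and y :: 'b and p r :: real and N :: nat
    and Jp :: "'a \<Rightarrow> ('a \<Rightarrow>\<^sub>L real)" and Jps :: "('a \<Rightarrow>\<^sub>L real) \<Rightarrow> 'a"
    and Jr :: "'b \<Rightarrow> ('b \<Rightarrow>\<^sub>L real)"
    and x :: "nat \<Rightarrow> 'a" and s t :: "nat \<Rightarrow> nat \<Rightarrow> real"
    and v :: "nat \<Rightarrow> nat \<Rightarrow> ('a \<Rightarrow>\<^sub>L real)" and ws :: "nat \<Rightarrow> nat \<Rightarrow> ('b \<Rightarrow>\<^sub>L real)"
  assumes X: "smooth_space TYPE('a)" "unif_convex TYPE('a)"
    and pr: "p > 1" "r > 1" and N: "N \<ge> 1"
    and y: "y \<in> range (blinfun_apply A)"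
    and Jp: "duality_map p Jp"
    and Jps: "dual_duality_map (p / (p - 1)) Jps"
    and Jr: "duality_map r Jr"
    and x0: "Jp (x 0) \<in> closure (range (adj A))"
    and init: "blinfun_apply A (x 0) \<noteq> y \<Longrightarrow>
        v 0 1 = adj A (Jr (blinfun_apply A (x 0) - y)) \<and> ws 0 1 = Jr (blinfun_apply A (x 0) - y)"
    and s_min: "\<And>n \<sigma>. n \<ge> 1 \<Longrightarrow> (\<forall>m\<le>n. blinfun_apply A (x m) \<noteq> y) \<Longrightarrow>
        norm (adj A (Jr (blinfun_apply A (x n) - y))
              - (\<Sum>k=1..Nn N (n - 1). s n k *\<^sub>R v (n - 1) k)) powr (p / (p - 1))
        \<le> norm (adj A (Jr (blinfun_apply A (x n) - y))
              - (\<Sum>k=1..Nn N (n - 1). \<sigma> k *\<^sub>R v (n - 1) k)) powr (p / (p - 1))"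
    and v_new: "\<And>n. n \<ge> 1 \<Longrightarrow> (\<forall>m\<le>n. blinfun_apply A (x m) \<noteq> y) \<Longrightarrow>
        v n (Nn N n) = adj A (Jr (blinfun_apply A (x n) - y))
              - (\<Sum>k=1..Nn N (n - 1). s n k *\<^sub>R v (n - 1) k)
      \<and> ws n (Nn N n) = Jr (blinfun_apply A (x n) - y)
              - (\<Sum>k=1..Nn N (n - 1). s n k *\<^sub>R ws (n - 1) k)"
    and v_old: "\<And>n j. n \<ge> 1 \<Longrightarrow> (\<forall>m\<le>n. blinfun_apply A (x m) \<noteq> y) \<Longrightarrow>
        1 \<le> j \<Longrightarrow> j < Nn N n \<Longrightarrow>
        v n j = v (n - 1) (Nn N (n - 1) + 1 + j - Nn N n)
      \<and> ws n j = ws (n - 1) (Nn N (n - 1) + 1 + j - Nn N n)"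
    and t_min: "\<And>n \<tau>. (\<forall>m\<le>n. blinfun_apply A (x m) \<noteq> y) \<Longrightarrow>
        1 / (p / (p - 1)) * norm (Jp (x n) - (\<Sum>k=1..Nn N n. t n k *\<^sub>R v n k)) powr (p / (p - 1))
          + (\<Sum>k=1..Nn N n. t n k * blinfun_apply (ws n k) y)
        \<le> 1 / (p / (p - 1)) * norm (Jp (x n) - (\<Sum>k=1..Nn N n. \<tau> k *\<^sub>R v n k)) powr (p / (p - 1))
          + (\<Sum>k=1..Nn N n. \<tau> k * blinfun_apply (ws n k) y)"
    and x_next: "\<And>n. (\<forall>m\<le>n. blinfun_apply A (x m) \<noteq> y) \<Longrightarrow>
        x (Suc n) = Jps (Jp (x n) - (\<Sum>k=1..Nn N n. t n k *\<^sub>R v n k))"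
  shows "\<forall>n. (\<forall>m\<le>n. blinfun_apply A (x m) \<noteq> y) \<longrightarrow>
     (\<forall>j k. 1 \<le> j \<longrightarrow> j < k \<longrightarrow> k \<le> Nn N n \<longrightarrow> blinfun_apply (v n j) (Jps (v n k)) = 0)"
proof (rule allI, rule impI)
  \<comment> \<open>Only the update rules of the directions matter.\<close>
  fix n assume "\<forall>m\<le>n. A (x m) \<noteq> y"
  then show "\<forall>j k. 1 \<le> j \<longrightarrow> j < k \<longrightarrow> k \<le> Nn N n \<longrightarrow> v n j (Jps (v n k)) = 0"
  proof (induction n)
    case 0
    then show ?case by (simp add: Nn_def)
  next
    case (Suc n)
    let ?u = "adj A (Jr (A (x (Suc n)) - y))"
    have least: "norm (?u - (\<Sum>k=1..Nn N n. s (Suc n) k *\<^sub>R v n k))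
        \<le> norm (?u - (\<Sum>k=1..Nn N n. \<sigma> k *\<^sub>R v n k))" for \<sigma>
      using powr_le_imp_le_base[OF s_min[of "Suc n" \<sigma>]] Suc.prems pr by simp
    have new: "v n i (Jps (v (Suc n) (Nn N (Suc n)))) = 0" if "1 \<le> i" "i \<le> Nn N n" for i
    proof (rule bj_orthogonal_dual_duality_map[OF X(2) Jps])
      show "bj_orthogonal (v (Suc n) (Nn N (Suc n))) (v n i)"
        using bj_orthogonal_least_residual[OF least, of i] that v_new[of "Suc n"] Suc.prems by simp
    qed
    have old: "v n i (Jps (v n i')) = 0" if "1 \<le> i" "i < i'" "i' \<le> Nn N n" for i i'
      using Suc that by auto
    have shift: "v (Suc n) j = v n (Nn N n + 1 + j - Nn N (Suc n))" if "1 \<le> j" "j < Nn N (Suc n)" for j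
      using v_old[of "Suc n" j] Suc.prems that by simp
    have "Nn N (Suc n) \<le> Nn N n + 1"
      by (simp add: Nn_def)
    from pairwise_after_shift[where R = "\<lambda>f g. blinfun_apply f (Jps g) = 0"
        and m = "Nn N n" and m' = "Nn N (Suc n)" and v = "v n" and w = "v (Suc n)", OF this old new shift]
    show ?case by blast
  qed
qed

end
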